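(* There is an absolute constant $c>0$ such that for every positive integer $s$ and all real $0<a<b$, there exist probability distributions $P$ and $Q$ supported on $[a,b]$ such that $\int x^\ell\,dP(x)=\int x^\ell\,dQ(x)$ for $\ell=0,1,\dots,s$, and $$\Big|\int_a^b \Big|x-\tfrac{a+b}{2}\Big|\,dP(x)-\int_a^b\Big|x-\tfrac{a+b}{2}\Big|\,dQ(x)\Big|\ \ge\ c\,\frac{b-a}{s}.$$ *)

theory Defs
  imports "HOL-Probability.Probability"
begin

end

(*
  Put x_j = sin (2 pi j / 8s) and w = exp (2 pi i / 8s), and let K_j = |sum_{m<2s} w^(m j)|^2 be a
  Fejer kernel on the 8s-th roots of unity. P and Q are the normalised positive and negative parts of
  the signed measure with mass (-1)^j K_j at the node x_j, rescaled from [-1,1] to [a,b].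
  Written in terms of the characters j -> w^(m j), the weight (-1)^j K_j x_j^k with k <= s only
  contains frequencies strictly between 0 and 8s, which sum to zero over the grid; hence all moments
  up to order s agree.  For the absolute deviation, the closed form
  K_j = sin^2 (j pi / 4) / sin^2 (j pi / 8s) turns the alternating sum of K_j |x_j| into a sum of
  second differences of cot over blocks of four consecutive nodes.  By convexity of cot on (0, pi/2)
  each block has the same sign, and the first block alone has size of order s, which gives the
  bound (b - a) / (32 pi s).
*)

theory Submission
  imports Defs
begin

section \<open>Roots of unity\<close>

definition root_char :: "nat \<Rightarrow> int \<Rightarrow> nat \<Rightarrow> complex" where
  "root_char N m j = cis (2 * pi * real_of_int m * real j / real N)"

lemma root_char_zero [simp]: "root_char N 0 j = 1"
  by (simp add: root_char_def)

lemma root_char_mult: "root_char N m j * root_char N n j = root_char N (m + n) j"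
  by (simp add: root_char_def cis_mult add_divide_distrib algebra_simps)

lemma root_char_power: "root_char N m j ^ i = root_char N (int i * m) j"
  unfolding root_char_def Complex.DeMoivre by (simp add: mult_ac)

lemma cnj_root_char: "cnj (root_char N m j) = root_char N (- m) j"
  by (simp add: root_char_def cis_cnj)

lemma root_char_1_eq_1_iff:
  assumes "0 < N"
  shows "root_char N m 1 = 1 \<longleftrightarrow> int N dvd m"
proof
  assume "root_char N m 1 = 1"
  then have "cis (2 * pi * real_of_int m / real N) = 1"
    by (simp add: root_char_def)
  then have "cos (2 * pi * real_of_int m / real N) = 1"
    by (metis cis.sel(1) one_complex.sel(1))
  then obtain n :: int where "2 * pi * real_of_int m / real N = real_of_int n * 2 * pi"
    by (auto simp: cos_one_2pi_int)
  then have "real_of_int m = real_of_int n * real N"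
    using assms by (simp add: field_simps)
  then have "real_of_int m = real_of_int (n * int N)"
    by simp
  then have "m = n * int N"
    by (simp only: of_int_eq_iff)
  then show "int N dvd m" by simp
next
  assume "int N dvd m"
  then obtain n where "m = int N * n" ..
  then have "root_char N m 1 = cis (2 * pi * real_of_int n)"
    using assms unfolding root_char_def by (intro arg_cong [where f = cis]) simp
  also have "\<dots> = 1"
    by (rule cis_multiple_2pi) simp
  finally show "root_char N m 1 = 1" .
qed

lemma sum_root_char_eq_0:
  assumes "0 < N" and "\<not> int N dvd m"
  shows "(\<Sum>j<N. root_char N m j) = 0"
proof -
  let ?\<rho> = "root_char N m 1"
  have "?\<rho> \<noteq> 1" "?\<rho> ^ N = 1"
    using assms unfolding root_char_power root_char_1_eq_1_iff [OF assms(1)] by simp_all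
  moreover have "(\<Sum>j<N. root_char N m j) = (\<Sum>j<N. ?\<rho> ^ j)"
    unfolding root_char_power by (intro sum.cong refl) (simp add: root_char_def mult_ac)
  ultimately show ?thesis
    using geometric_sum [of ?\<rho> N] by simp
qed

lemma root_char_reflect:
  assumes "0 < N" and "i \<le> N"
  shows "root_char N m (N - i) = cnj (root_char N m i)"
proof -
  define x where "x = 2 * pi * real_of_int m * real i / real N"
  have "root_char N m (N - i) = cis (2 * pi * real_of_int m + - x)"
    unfolding root_char_def x_def using assms by (simp add: field_simps)
  also have "\<dots> = cis (2 * pi * real_of_int m) * cis (- x)"
    by (rule cis_mult [symmetric])
  also have "\<dots> = cnj (root_char N m i)"
    by (simp add: root_char_def x_def cis_cnj)
  finally show ?thesis .
qed

lemma root_char_half: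
  assumes "0 < n"
  shows "root_char (2 * n) (int n) j = (- 1) ^ j"
proof -
  have "root_char (2 * n) (int n) j = cis (real j * pi)"
    using assms by (simp add: root_char_def field_simps)
  also have "\<dots> = cis pi ^ j"
    by (rule Complex.DeMoivre [symmetric])
  finally show ?thesis by simp
qed

section \<open>A Fejer kernel on the grid of roots of unity\<close>

definition node :: "nat \<Rightarrow> nat \<Rightarrow> real" where
  "node N j = sin (2 * pi * real j / real N)"

definition fejer_kernel :: "nat \<Rightarrow> nat \<Rightarrow> nat \<Rightarrow> real" where
  "fejer_kernel N M j = (cmod (\<Sum>a<M. root_char N (int a) j))\<^sup>2"

lemma fejer_kernel_nonneg: "0 \<le> fejer_kernel N M j"
  by (simp add: fejer_kernel_def)

lemma of_real_node: "complex_of_real (node N j) = (root_char N 1 j - root_char N (- 1) j) / (2 * \<i>)"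
proof -
  have "root_char N 1 j - root_char N (- 1) j = 2 * \<i> * complex_of_real (node N j)"
    by (simp add: node_def root_char_def complex_eq_iff)
  then show ?thesis by simp
qed

lemma of_real_fejer_kernel:
  "complex_of_real (fejer_kernel N M j) = (\<Sum>a<M. root_char N (int a) j) * (\<Sum>b<M. root_char N (- int b) j)"
  unfolding fejer_kernel_def complex_norm_square cnj_sum cnj_root_char by simp

lemma sum_fejer_kernel:
  assumes "M \<le> N"
  shows "(\<Sum>j<N. fejer_kernel N M j) = real N * real M"
proof -
  have "complex_of_real (\<Sum>j<N. fejer_kernel N M j) = (\<Sum>a<M. \<Sum>b<M. \<Sum>j<N. root_char N (int a - int b) j)"
    by (simp add: of_real_fejer_kernel sum_product root_char_mult sum.swap [of _ "{..<N}"])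
  also have "\<dots> = (\<Sum>a<M. \<Sum>b<M. if a = b then of_nat N else 0)"
  proof (intro sum.cong refl)
    fix a b assume ab: "a \<in> {..<M}" "b \<in> {..<M}"
    show "(\<Sum>j<N. root_char N (int a - int b) j) = (if a = b then of_nat N else 0)"
    proof (cases "a = b")
      case False
      have "\<not> int N dvd int a - int b"
      proof
        assume "int N dvd int a - int b"
        then have "\<bar>int N\<bar> \<le> \<bar>int a - int b\<bar>" using False by (intro dvd_imp_le_int) auto
        then show False using ab assms by auto
      qed
      then show ?thesis using False ab assms by (simp add: sum_root_char_eq_0)
    qed simp
  qed
  also have "\<dots> = complex_of_real (real N * real M)"
    by simp
  finally show ?thesis by (simp only: of_real_eq_iff)
qed

lemma fejer_kernel_reflect:
  assumes "0 < N" and "i \<le> N"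
  shows "fejer_kernel N M (N - i) = fejer_kernel N M i"
  by (simp add: fejer_kernel_def root_char_reflect [OF assms] flip: cnj_sum)

lemma node_reflect:
  assumes "0 < N" and "i \<le> N"
  shows "node N (N - i) = - node N i"
proof -
  have "2 * pi * real (N - i) / real N = 2 * pi - 2 * pi * real i / real N"
    using assms by (simp add: field_simps)
  then show ?thesis by (simp add: node_def sin_diff)
qed

lemma norm_cis_minus_one_squared: "(cmod (cis x - 1))\<^sup>2 = 4 * (sin (x / 2))\<^sup>2"
proof -
  have "(cmod (cis x - 1))\<^sup>2 = (cos x - 1)\<^sup>2 + (sin x)\<^sup>2"
    by (simp add: cmod_power2)
  also have "\<dots> = 2 - 2 * cos x"
    by (simp add: power2_eq_square algebra_simps sin_squared_eq)
  also have "cos x = 1 - 2 * (sin (x / 2))\<^sup>2"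
    using cos_double_sin [of "x / 2"] by simp
  finally show ?thesis by simp
qed

lemma fejer_kernel_closed_form:
  assumes "0 < j" and "j < N"
  shows "fejer_kernel N M j = (sin (pi * real M * real j / real N))\<^sup>2 / (sin (pi * real j / real N))\<^sup>2"
proof -
  define \<phi> where "\<phi> = 2 * pi * real j / real N"
  have "0 < N" using assms by simp
  have "root_char N (int j) 1 \<noteq> 1"
    unfolding root_char_1_eq_1_iff [OF \<open>0 < N\<close>] using assms by (auto dest: zdvd_imp_le)
  then have ne: "cis \<phi> \<noteq> 1"
    by (simp add: root_char_def \<phi>_def)
  have "(\<Sum>a<M. root_char N (int a) j) = (\<Sum>a<M. cis \<phi> ^ a)"
    unfolding Complex.DeMoivre by (simp add: root_char_def \<phi>_def mult_ac)
  also have "\<dots> = (cis \<phi> ^ M - 1) / (cis \<phi> - 1)"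
    by (rule geometric_sum [OF ne])
  also have "cis \<phi> ^ M = cis (real M * \<phi>)"
    by (rule Complex.DeMoivre)
  finally have "fejer_kernel N M j = (cmod (cis (real M * \<phi>) - 1))\<^sup>2 / (cmod (cis \<phi> - 1))\<^sup>2"
    by (simp add: fejer_kernel_def norm_divide power_divide)
  moreover have "real M * \<phi> / 2 = pi * real M * real j / real N" "\<phi> / 2 = pi * real j / real N"
    by (simp_all add: \<phi>_def)
  ultimately show ?thesis
    by (simp add: norm_cis_minus_one_squared)
qed

section \<open>Vanishing alternating moments\<close>

lemma root_char_difference_power:
  "(root_char N 1 j - root_char N (- 1) j) ^ k =
    (\<Sum>i\<le>k. of_nat (k choose i) * (- 1) ^ (k - i) * root_char N (2 * int i - int k) j)"
proof -
  have "(root_char N 1 j - root_char N (- 1) j) ^ k =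
      (\<Sum>i\<le>k. of_nat (k choose i) * root_char N 1 j ^ i * (- root_char N (- 1) j) ^ (k - i))"
    using binomial_ring [of "root_char N 1 j" "- root_char N (- 1) j" k] by simp
  also have "\<dots> = (\<Sum>i\<le>k. of_nat (k choose i) * (- 1) ^ (k - i) * root_char N (2 * int i - int k) j)"
  proof (rule sum.cong [OF refl])
    fix i assume "i \<in> {..k}"
    then have "int i + - int (k - i) = 2 * int i - int k" by simp
    then have "root_char N 1 j ^ i * root_char N (- 1) j ^ (k - i) = root_char N (2 * int i - int k) j"
      by (simp add: root_char_power root_char_mult)
    then show "of_nat (k choose i) * root_char N 1 j ^ i * (- root_char N (- 1) j) ^ (k - i) =
        of_nat (k choose i) * (- 1) ^ (k - i) * root_char N (2 * int i - int k) j"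
      by (simp add: power_minus [of "root_char N (- 1) j"] mult_ac)
  qed
  finally show ?thesis .
qed

lemma of_real_alternating_fejer_kernel:
  assumes "0 < n"
  shows "complex_of_real ((- 1) ^ j * fejer_kernel (2 * n) M j) =
    (\<Sum>a<M. \<Sum>b<M. root_char (2 * n) (int n + int a - int b) j)"
proof -
  have "complex_of_real ((- 1) ^ j * fejer_kernel (2 * n) M j) =
      root_char (2 * n) (int n) j * ((\<Sum>a<M. root_char (2 * n) (int a) j) * (\<Sum>b<M. root_char (2 * n) (- int b) j))"
    using root_char_half [OF assms, of j] by (simp add: of_real_fejer_kernel)
  also have "\<dots> = (\<Sum>a<M. \<Sum>b<M. root_char (2 * n) (int n) j * (root_char (2 * n) (int a) j * root_char (2 * n) (- int b) j))"
    unfolding sum_product by (simp only: sum_distrib_left)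
  finally show ?thesis
    by (simp add: root_char_mult add_diff_eq mult.assoc [symmetric])
qed

lemma alternating_fejer_moment_term:
  assumes "0 < n"
  shows "complex_of_real ((- 1) ^ j * fejer_kernel (2 * n) M j * node (2 * n) j ^ k) =
    (\<Sum>i\<le>k. \<Sum>a<M. \<Sum>b<M. of_nat (k choose i) * (- 1) ^ (k - i) *
        root_char (2 * n) (int n + int a - int b + (2 * int i - int k)) j) / (2 * \<i>) ^ k"
proof -
  let ?\<chi> = "root_char (2 * n)"
  let ?c = "\<lambda>i. of_nat (k choose i) * (- 1) ^ (k - i) :: complex"
  have "complex_of_real ((- 1) ^ j * fejer_kernel (2 * n) M j * node (2 * n) j ^ k) =
      complex_of_real ((- 1) ^ j * fejer_kernel (2 * n) M j) * complex_of_real (node (2 * n) j) ^ k"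
    by simp
  also have "\<dots> = (\<Sum>a<M. \<Sum>b<M. ?\<chi> (int n + int a - int b) j) * (\<Sum>i\<le>k. ?c i * ?\<chi> (2 * int i - int k) j) / (2 * \<i>) ^ k"
    unfolding of_real_alternating_fejer_kernel [OF assms] of_real_node power_divide root_char_difference_power
    by (simp only: times_divide_eq_right)
  also have "(\<Sum>a<M. \<Sum>b<M. ?\<chi> (int n + int a - int b) j) * (\<Sum>i\<le>k. ?c i * ?\<chi> (2 * int i - int k) j) =
      (\<Sum>i\<le>k. \<Sum>a<M. \<Sum>b<M. ?\<chi> (int n + int a - int b) j * (?c i * ?\<chi> (2 * int i - int k) j))"
    by (simp add: sum_distrib_left sum_distrib_right)
  also have "\<dots> = (\<Sum>i\<le>k. \<Sum>a<M. \<Sum>b<M. ?c i * ?\<chi> (int n + int a - int b + (2 * int i - int k)) j)"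
    by (simp only: mult.left_commute [of "?\<chi> _ j"] root_char_mult)
  finally show ?thesis .
qed

lemma sum_alternating_fejer_moment:
  assumes "M + k \<le> n"
  shows "(\<Sum>j<2 * n. (- 1) ^ j * fejer_kernel (2 * n) M j * node (2 * n) j ^ k) = 0"
proof (cases "M = 0")
  case True
  then show ?thesis by (simp add: fejer_kernel_def)
next
  case False
  then have "0 < n" using assms by simp
  have "complex_of_real (\<Sum>j<2 * n. (- 1) ^ j * fejer_kernel (2 * n) M j * node (2 * n) j ^ k) =
    (\<Sum>i\<le>k. \<Sum>a<M. \<Sum>b<M. of_nat (k choose i) * (- 1) ^ (k - i) *
        (\<Sum>j<2 * n. root_char (2 * n) (int n + int a - int b + (2 * int i - int k)) j)) / (2 * \<i>) ^ k"
  proof -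
    have "complex_of_real (\<Sum>j<2 * n. (- 1) ^ j * fejer_kernel (2 * n) M j * node (2 * n) j ^ k) =
      (\<Sum>j<2 * n. (\<Sum>i\<le>k. \<Sum>a<M. \<Sum>b<M. of_nat (k choose i) * (- 1) ^ (k - i) *
        root_char (2 * n) (int n + int a - int b + (2 * int i - int k)) j) / (2 * \<i>) ^ k)"
      unfolding of_real_sum alternating_fejer_moment_term [OF \<open>0 < n\<close>] ..
    then show ?thesis
      by (simp add: sum_divide_distrib [symmetric] sum_distrib_left sum.swap [of _ "{..<2 * n}"])
  qed
  also have "\<dots> = 0"
  proof -
    have "(\<Sum>j<2 * n. root_char (2 * n) (int n + int a - int b + (2 * int i - int k)) j) = 0"
      if "a < M" "b < M" "i \<le> k" for a b i
    proof (rule sum_root_char_eq_0)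
      let ?e = "int n + int a - int b + (2 * int i - int k)"
      have "0 < ?e" "?e < int (2 * n)" using that assms by linarith+
      then show "\<not> int (2 * n) dvd ?e" by (auto dest: zdvd_imp_le)
    qed (use \<open>0 < n\<close> in simp)
    then show ?thesis by simp
  qed
  finally show ?thesis by (simp only: of_real_eq_0_iff)
qed

lemma sum_alternating_fejer_poly_moment:
  assumes "M + l \<le> n"
  shows "(\<Sum>j<2 * n. (- 1) ^ j * fejer_kernel (2 * n) M j * (c + h * node (2 * n) j) ^ l) = 0"
proof -
  have "(\<Sum>j<2 * n. (- 1) ^ j * fejer_kernel (2 * n) M j * (c + h * node (2 * n) j) ^ l) =
      (\<Sum>k\<le>l. of_nat (l choose k) * h ^ k * c ^ (l - k) *
        (\<Sum>j<2 * n. (- 1) ^ j * fejer_kernel (2 * n) M j * node (2 * n) j ^ k))"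
  proof -
    have "(- 1) ^ j * fejer_kernel (2 * n) M j * (c + h * node (2 * n) j) ^ l =
        (\<Sum>k\<le>l. of_nat (l choose k) * h ^ k * c ^ (l - k) *
          ((- 1) ^ j * fejer_kernel (2 * n) M j * node (2 * n) j ^ k))" for j
      using binomial_ring [of "h * node (2 * n) j" c l]
      by (simp add: add.commute [of c] sum_distrib_left power_mult_distrib mult_ac)
    then show ?thesis
      by (simp add: sum.swap [of _ "{..<2 * n}"] sum_distrib_left)
  qed
  also have "\<dots> = 0"
    using assms by (simp add: sum_alternating_fejer_moment)
  finally show ?thesis .
qed

section \<open>The alternating absolute moment\<close>

lemma sum_lessThan_reflect_halves:
  fixes F :: "nat \<Rightarrow> 'a::semiring_1"
  assumes "F 0 = 0" and "F n = 0" and "\<And>i. i \<le> 2 * n \<Longrightarrow> F (2 * n - i) = F i"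
  shows "(\<Sum>j<2 * n. F j) = 2 * (\<Sum>j<n. F (Suc j))"
proof -
  have "(\<Sum>j<n. F j) = (\<Sum>j<n. F (Suc j))"
    using sum.lessThan_Suc [of F n] sum.lessThan_Suc_shift [of F n] assms(1,2) by simp
  moreover have "(\<Sum>j<n. F (n + j)) = (\<Sum>j<n. F (Suc j))"
  proof -
    have "(\<Sum>j<n. F (n + j)) = (\<Sum>j<n. F (n + (n - Suc j)))"
      by (rule sum.nat_diff_reindex [symmetric])
    also have "\<dots> = (\<Sum>j<n. F (Suc j))"
    proof (rule sum.cong [OF refl])
      fix j assume "j \<in> {..<n}"
      then have "n + (n - Suc j) = 2 * n - Suc j" "Suc j \<le> 2 * n" by auto
      then show "F (n + (n - Suc j)) = F (Suc j)" using assms(3) by simp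
    qed
    finally show ?thesis .
  qed
  moreover have "(\<Sum>j<n + m. F j) = (\<Sum>j<n. F j) + (\<Sum>j<m. F (n + j))" for m
    by (induct m) (simp_all add: add.assoc)
  ultimately show ?thesis by (simp add: mult_2)
qed

lemma sum_lessThan_groups_of_four:
  "(\<Sum>j<4 * s. g (Suc j)) = (\<Sum>q<s. g (4 * q + 1) + g (4 * q + 2) + g (4 * q + 3) + g (4 * q + 4))"
proof -
  have "(\<Sum>j<4 * s. g (Suc j)) = (\<Sum>q<s. \<Sum>j\<in>{q * 4..<q * 4 + 4}. g (Suc j))"
    using sum.nat_group [of "\<lambda>j. g (Suc j)" 4 s] by (simp add: mult.commute)
  also have "\<dots> = (\<Sum>q<s. g (4 * q + 1) + g (4 * q + 2) + g (4 * q + 3) + g (4 * q + 4))"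
  proof (rule sum.cong [OF refl])
    fix q :: nat
    have "{q * 4..<q * 4 + 4} = {q * 4, q * 4 + 1, q * 4 + 2, q * 4 + 3}" by auto
    then show "(\<Sum>j\<in>{q * 4..<q * 4 + 4}. g (Suc j)) = g (4 * q + 1) + g (4 * q + 2) + g (4 * q + 3) + g (4 * q + 4)"
      by (simp add: ac_simps numeral_3_eq_3 eval_nat_numeral)
  qed
  finally show ?thesis .
qed

lemma sin_ge_half_self:
  fixes t :: real
  assumes "0 \<le> t" and "t \<le> 1"
  shows "t / 2 \<le> sin t"
proof -
  have "\<bar>sin t - (\<Sum>m<3. sin_coeff m * t ^ m)\<bar> \<le> inverse (fact 3) * \<bar>t\<bar> ^ 3"
    by (rule Maclaurin_sin_bound)
  then have "\<bar>sin t - t\<bar> \<le> t ^ 3 / 6"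
    using assms by (simp add: sin_coeff_def eval_nat_numeral fact_numeral)
  moreover have "t ^ 3 \<le> t"
    using mult_right_mono [OF mult_le_one [OF assms(2,1,2)] assms(1)] by (simp add: power3_eq_cube)
  ultimately show ?thesis by linarith
qed

lemma sin_diff_mult_sin_add: "sin (a - t :: real) * sin (a + t) = (sin a)\<^sup>2 - (sin t)\<^sup>2"
proof -
  have "sin (a - t) * sin (a + t) = (sin a)\<^sup>2 * (cos t)\<^sup>2 - (cos a)\<^sup>2 * (sin t)\<^sup>2"
    by (simp add: sin_add sin_diff power2_eq_square algebra_simps)
  also have "\<dots> = (sin a)\<^sup>2 * (1 - (sin t)\<^sup>2) - (1 - (sin a)\<^sup>2) * (sin t)\<^sup>2"
    by (simp add: cos_squared_eq)
  finally show ?thesis by (simp add: algebra_simps)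
qed

lemma cot_second_difference:
  fixes a t :: real
  assumes "0 < t" and "t < a" and "a + t < pi / 2"
  shows "cot (a - t) + cot (a + t) - 2 * cot a = 2 * cos a * (sin t)\<^sup>2 / (sin a * ((sin a)\<^sup>2 - (sin t)\<^sup>2))"
    and "0 < (sin a)\<^sup>2 - (sin t)\<^sup>2"
proof -
  have pos: "0 < sin (a - t)" "0 < sin (a + t)" "0 < sin a"
    using assms by (auto intro: sin_gt_zero)
  then show diff_pos: "0 < (sin a)\<^sup>2 - (sin t)\<^sup>2"
    by (metis sin_diff_mult_sin_add mult_pos_pos)
  have "cos (a - t) * sin (a + t) + cos (a + t) * sin (a - t) = 2 * sin a * cos a"
    using sin_add [of "a + t" "a - t"] sin_double [of a] by (simp add: mult.commute)
  then have sum_eq: "cot (a - t) + cot (a + t) = 2 * sin a * cos a / ((sin a)\<^sup>2 - (sin t)\<^sup>2)"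
    using pos by (simp add: cot_def field_simps flip: sin_diff_mult_sin_add)
  show "cot (a - t) + cot (a + t) - 2 * cot a = 2 * cos a * (sin t)\<^sup>2 / (sin a * ((sin a)\<^sup>2 - (sin t)\<^sup>2))"
    unfolding sum_eq using pos diff_pos by (simp add: cot_def field_simps power2_eq_square)
qed

lemma cot_second_difference_nonneg:
  fixes a t :: real
  assumes "0 < t" and "t < a" and "a + t < pi / 2"
  shows "0 \<le> cot (a - t) + cot (a + t) - 2 * cot a"
proof -
  have "0 < sin a" "0 \<le> cos a"
    using assms by (auto intro: sin_gt_zero cos_ge_zero)
  then show ?thesis
    using cot_second_difference [OF assms] by simp
qed

lemma cot_second_difference_at_double:
  fixes t :: real
  assumes "0 < t" and "t \<le> pi / 8"
  shows "1 / (32 * t) \<le> cot t + cot (3 * t) - 2 * cot (2 * t)"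
proof -
  have t: "0 < t" "t < 2 * t" "2 * t + t < pi / 2"
    using assms by auto
  have eqs: "2 * t - t = t" "2 * t + t = 3 * t" by auto
  note second_difference = cot_second_difference [OF t, unfolded eqs]
  have "cos (pi / 3) \<le> cos (2 * t)"
    using assms by (intro cos_monotone_0_pi_le) auto
  then have cos2: "1 / 2 \<le> cos (2 * t)"
    by (simp add: cos_60)
  have "t / 2 \<le> sin t"
    using sin_ge_half_self [of t] assms pi_less_4 by simp
  then have "t\<^sup>2 / 4 \<le> (sin t)\<^sup>2"
    using power_mono [of "t / 2" "sin t" 2] assms by (simp add: power_divide)
  also have "(sin t)\<^sup>2 \<le> 2 * cos (2 * t) * (sin t)\<^sup>2"
    using mult_right_mono [of 1 "2 * cos (2 * t)" "(sin t)\<^sup>2"] cos2 by simp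
  finally have num: "t\<^sup>2 / 4 \<le> 2 * cos (2 * t) * (sin t)\<^sup>2" .
  have sin2: "0 < sin (2 * t)" "sin (2 * t) \<le> 2 * t"
    using t by (auto intro: sin_gt_zero sin_x_le_x)
  then have "(sin (2 * t))\<^sup>2 \<le> 4 * t\<^sup>2"
    using power_mono [of "sin (2 * t)" "2 * t" 2] by (simp add: power_mult_distrib)
  then have "(sin (2 * t))\<^sup>2 - (sin t)\<^sup>2 \<le> 4 * t\<^sup>2"
    using zero_le_power2 [of "sin t"] by linarith
  then have den: "sin (2 * t) * ((sin (2 * t))\<^sup>2 - (sin t)\<^sup>2) \<le> 2 * t * (4 * t\<^sup>2)"
    using sin2 second_difference(2) by (intro mult_mono) auto
  have "1 / (32 * t) = (t\<^sup>2 / 4) / (2 * t * (4 * t\<^sup>2))"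
    using assms by (simp add: field_simps power2_eq_square)
  also have "\<dots> \<le> 2 * cos (2 * t) * (sin t)\<^sup>2 / (sin (2 * t) * ((sin (2 * t))\<^sup>2 - (sin t)\<^sup>2))"
    using num den sin2 second_difference(2) cos2
    by (intro frac_le mult_pos_pos mult_nonneg_nonneg) auto
  also have "\<dots> = cot t + cot (3 * t) - 2 * cot (2 * t)"
    using second_difference(1) by simp
  finally show ?thesis .
qed

definition abs_moment_term :: "nat \<Rightarrow> nat \<Rightarrow> real" where
  "abs_moment_term s j = (- 1) ^ j * fejer_kernel (8 * s) (2 * s) j * \<bar>node (8 * s) j\<bar>"

lemma abs_moment_term_closed_form:
  assumes "1 \<le> j" and "j \<le> 4 * s"
  shows "abs_moment_term s j = (- 1) ^ j * (sin (real j * pi / 4))\<^sup>2 * (2 * cot (real j * pi / (8 * real s)))"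
proof -
  define u where "u = real j * pi / (8 * real s)"
  have "0 < s" using assms by simp
  then have "0 < u" "u \<le> pi / 2"
    using assms by (auto simp: u_def field_simps)
  then have "0 < sin u" "0 \<le> cos u"
    by (auto intro: sin_gt_zero cos_ge_zero)
  have "node (8 * s) j = sin (2 * u)"
    using \<open>0 < s\<close> by (simp add: node_def u_def field_simps)
  with \<open>0 < sin u\<close> \<open>0 \<le> cos u\<close> have node: "\<bar>node (8 * s) j\<bar> = 2 * sin u * cos u"
    by (simp add: sin_double)
  have args: "pi * real (2 * s) * real j / real (8 * s) = real j * pi / 4" "pi * real j / real (8 * s) = u"
    using \<open>0 < s\<close> by (simp_all add: u_def field_simps)
  have kernel: "fejer_kernel (8 * s) (2 * s) j = (sin (real j * pi / 4))\<^sup>2 / (sin u)\<^sup>2"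
    using assms fejer_kernel_closed_form [of j "8 * s" "2 * s", unfolded args] by simp
  have "fejer_kernel (8 * s) (2 * s) j * \<bar>node (8 * s) j\<bar> = (sin (real j * pi / 4))\<^sup>2 * (2 * cot u)"
    unfolding node kernel cot_def using \<open>0 < sin u\<close> by (simp add: power2_eq_square)
  then show ?thesis
    by (simp add: abs_moment_term_def u_def mult.assoc)
qed

lemma sin_squared_quarter_multiple: "(sin (real (4 * q + r) * pi / 4))\<^sup>2 = (sin (real r * pi / 4))\<^sup>2"
proof -
  have "sin (real (4 * q + r) * pi / 4) = sin (real q * pi + real r * pi / 4)"
    by (simp add: field_simps)
  also have "\<dots> = (- 1) ^ q * sin (real r * pi / 4)"
    by (simp add: sin_add)
  finally show ?thesis
    by (simp add: power_mult_distrib flip: power_mult)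
qed

text \<open>On each block of four nodes the factor \<open>sin\<^sup>2 (j * pi / 4)\<close> runs through \<open>1/2, 1, 1/2, 0\<close>,
  so a block is a second difference of \<open>cot\<close>.\<close>

lemma abs_moment_term_block:
  assumes "q < s"
  defines "t \<equiv> pi / (8 * real s)"
  defines "c \<equiv> real (4 * q + 2) * t"
  shows "abs_moment_term s (4 * q + 1) + abs_moment_term s (4 * q + 2) + abs_moment_term s (4 * q + 3)
      + abs_moment_term s (4 * q + 4) = - (cot (c - t) + cot (c + t) - 2 * cot c)"
proof -
  have block_term: "abs_moment_term s (4 * q + r) = (- 1) ^ r * (sin (real r * pi / 4))\<^sup>2 * (2 * cot (real (4 * q + r) * t))"
    if "1 \<le> r" "r \<le> 4" for r
    using that assms abs_moment_term_closed_form [of "4 * q + r" s, unfolded sin_squared_quarter_multiple]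
    by (simp add: power_add t_def)
  have sin_squares: "(sin (real 1 * pi / 4))\<^sup>2 = 1 / 2" "(sin (real 3 * pi / 4))\<^sup>2 = 1 / 2"
  proof -
    show "(sin (real 1 * pi / 4))\<^sup>2 = 1 / 2"
      by (simp add: sin_45 power_divide)
    have "sin (real 3 * pi / 4) = sin (pi - pi / 4)"
      by simp
    also have "\<dots> = sqrt 2 / 2"
      by (simp only: sin_pi_minus sin_45)
    finally have sin_3: "sin (real 3 * pi / 4) = sqrt 2 / 2" .
    show "(sin (real 3 * pi / 4))\<^sup>2 = 1 / 2"
      unfolding sin_3 by (simp add: power_divide)
  qed
  have "real (4 * q + 1) * t = c - t" "real (4 * q + 3) * t = c + t"
    by (simp_all add: c_def algebra_simps)
  then have "abs_moment_term s (4 * q + 1) = - cot (c - t)" "abs_moment_term s (4 * q + 2) = 2 * cot c"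
    "abs_moment_term s (4 * q + 3) = - cot (c + t)" "abs_moment_term s (4 * q + 4) = 0"
    using block_term [of 1] block_term [of 2] block_term [of 3] block_term [of 4] sin_squares
    by (simp_all add: c_def)
  then show ?thesis
    by simp
qed

lemma sum_abs_moment_term_eq_blocks:
  assumes "0 < s"
  shows "(\<Sum>j<8 * s. abs_moment_term s j) = 2 * (\<Sum>q<s. abs_moment_term s (4 * q + 1)
      + abs_moment_term s (4 * q + 2) + abs_moment_term s (4 * q + 3) + abs_moment_term s (4 * q + 4))"
proof -
  have "abs_moment_term s 0 = 0" "abs_moment_term s (4 * s) = 0"
    using assms by (simp_all add: abs_moment_term_def node_def)
  moreover have "abs_moment_term s (2 * (4 * s) - i) = abs_moment_term s i" if "i \<le> 2 * (4 * s)" for i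
    using assms that fejer_kernel_reflect [of "8 * s" i] node_reflect [of "8 * s" i]
    by (simp add: abs_moment_term_def minus_one_power_iff)
  ultimately show ?thesis
    using sum_lessThan_reflect_halves [of "abs_moment_term s" "4 * s"]
    by (simp add: sum_lessThan_groups_of_four)
qed

lemma sum_abs_moment_term_le:
  assumes "0 < s"
  shows "(\<Sum>j<8 * s. abs_moment_term s j) \<le> - real s / (2 * pi)"
proof -
  define t where "t = pi / (8 * real s)"
  define block where "block q = - (cot (real (4 * q + 2) * t - t) + cot (real (4 * q + 2) * t + t)
      - 2 * cot (real (4 * q + 2) * t))" for q
  have t: "0 < t" "t \<le> pi / 8"
    using assms by (simp_all add: t_def field_simps)
  have "(\<Sum>j<8 * s. abs_moment_term s j) = 2 * (\<Sum>q<s. block q)"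
    using abs_moment_term_block by (simp add: sum_abs_moment_term_eq_blocks [OF assms] block_def t_def)
  also have "(\<Sum>q<s. block q) = block 0 + (\<Sum>q\<in>{..<s} - {0}. block q)"
    using assms by (simp add: sum.remove [of "{..<s}" 0])
  also have "\<dots> \<le> block 0"
  proof -
    have "block q \<le> 0" if "q < s" for q
    proof -
      have "real (4 * q + 2) * t + t = real (4 * q + 3) * t"
        by (simp add: algebra_simps)
      also have "\<dots> < 4 * real s * t"
        using that t by (intro mult_strict_right_mono) auto
      also have "4 * real s * t = pi / 2"
        using assms by (simp add: t_def)
      finally show ?thesis
        using cot_second_difference_nonneg [OF t(1), of "real (4 * q + 2) * t"] t by (simp add: block_def)
    qed
    then show ?thesis
      by (auto intro!: sum_nonpos)
  qed
  also have "block 0 \<le> - (1 / (32 * t))"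
    using cot_second_difference_at_double [OF t] by (simp add: block_def algebra_simps)
  finally have "(\<Sum>j<8 * s. abs_moment_term s j) \<le> 2 * - (1 / (32 * t))"
    by simp
  also have "\<dots> = - real s / (2 * pi)"
    using assms by (simp add: t_def field_simps)
  finally show ?thesis .
qed

section \<open>Discrete probability measures\<close>

lemma distr_embed_pmf_finite:
  fixes w y :: "nat \<Rightarrow> real"
  assumes nonneg: "\<And>j. 0 \<le> w j" and vanish: "\<And>j. N \<le> j \<Longrightarrow> w j = 0"
    and total: "(\<Sum>j<N. w j) = 1" and range: "\<And>j. y j \<in> {a..b}"
  defines "P \<equiv> distr (measure_pmf (embed_pmf w)) borel y"
  shows "prob_space P" and "sets P = sets borel" and "measure P {a..b} = 1"
    and "\<And>f. f \<in> borel_measurable borel \<Longrightarrow> (\<integral>x. f x \<partial>P) = (\<Sum>j<N. w j * f (y j))"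
proof -
  let ?M = "measure_pmf (embed_pmf w)"
  have "(\<integral>\<^sup>+j. ennreal (w j) \<partial>count_space UNIV) = ennreal (\<Sum>j<N. w j)"
    using vanish nonneg by (subst nn_integral_count_space' [of "{..<N}"]) auto
  then have pmf_w: "pmf (embed_pmf w) j = w j" for j
    using pmf_embed_pmf [of w] nonneg total by simp
  have y_meas: "y \<in> measurable ?M borel" by simp
  show "prob_space P"
    unfolding P_def by (rule prob_space.prob_space_distr [OF prob_space_measure_pmf y_meas])
  show "sets P = sets borel"
    by (simp add: P_def)
  have "measure P {a..b} = measure ?M (y -` {a..b} \<inter> space ?M)"
    unfolding P_def by (rule measure_distr [OF y_meas]) simp
  also have "y -` {a..b} \<inter> space ?M = space ?M"
    using range by auto
  finally show "measure P {a..b} = 1"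
    by (simp add: measure_pmf.prob_space)
  fix f :: "real \<Rightarrow> real" assume "f \<in> borel_measurable borel"
  then have "(\<integral>x. f x \<partial>P) = (\<integral>j. f (y j) \<partial>?M)"
    unfolding P_def by (rule integral_distr [OF y_meas])
  also have "\<dots> = (\<Sum>j<N. f (y j) * pmf (embed_pmf w) j)"
  proof (rule integral_measure_pmf_real)
    fix j assume "j \<in> set_pmf (embed_pmf w)"
    then show "j \<in> {..<N}"
      using vanish by (metis set_pmf_iff pmf_w lessThan_iff not_le)
  qed simp
  finally show "(\<integral>x. f x \<partial>P) = (\<Sum>j<N. w j * f (y j))"
    by (simp add: pmf_w mult.commute)
qed

lemma probability_pair_from_signed_weights:
  fixes K v y :: "nat \<Rightarrow> real"
  assumes dominated: "\<And>j. \<bar>v j\<bar> \<le> K j" and balanced: "(\<Sum>j<N. v j) = 0"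
    and mass: "0 < (\<Sum>j<N. K j)" and range: "\<And>j. y j \<in> {a..b}"
  obtains P Q :: "real measure"
  where "prob_space P" "prob_space Q" "sets P = sets borel" "sets Q = sets borel"
    "measure P {a..b} = 1" "measure Q {a..b} = 1"
    "\<And>f. f \<in> borel_measurable borel \<Longrightarrow>
      (\<integral>x. f x \<partial>P) - (\<integral>x. f x \<partial>Q) = 2 / (\<Sum>j<N. K j) * (\<Sum>j<N. v j * f (y j))"
proof -
  define D where "D = (\<Sum>j<N. K j)"
  define wP where "wP j = (if j < N then (K j + v j) / D else 0)" for j
  define wQ where "wQ j = (if j < N then (K j - v j) / D else 0)" for j
  have nonneg: "0 \<le> wP j" "0 \<le> wQ j" for j
    using dominated [of j] mass by (auto simp: wP_def wQ_def D_def abs_le_iff)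
  have total: "(\<Sum>j<N. wP j) = 1" "(\<Sum>j<N. wQ j) = 1"
    using balanced mass by (simp_all add: wP_def wQ_def D_def sum_divide_distrib [symmetric]
        sum.distrib sum_subtractf)
  have vanish: "wP j = 0" "wQ j = 0" if "N \<le> j" for j
    using that by (simp_all add: wP_def wQ_def)
  note P = distr_embed_pmf_finite [of wP N y, OF nonneg(1) vanish(1) total(1) range]
    and Q = distr_embed_pmf_finite [of wQ N y, OF nonneg(2) vanish(2) total(2) range]
  have "(\<Sum>j<N. wP j * f (y j)) - (\<Sum>j<N. wQ j * f (y j)) = 2 / D * (\<Sum>j<N. v j * f (y j))" for f
  proof -
    have "(\<Sum>j<N. wP j * f (y j)) - (\<Sum>j<N. wQ j * f (y j)) = (\<Sum>j<N. (wP j - wQ j) * f (y j))"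
      by (simp add: sum_subtractf left_diff_distrib)
    also have "\<dots> = (\<Sum>j<N. 2 / D * (v j * f (y j)))"
      by (intro sum.cong refl) (simp add: wP_def wQ_def diff_divide_distrib [symmetric])
    finally show ?thesis
      by (simp add: sum_distrib_left)
  qed
  with P Q show ?thesis
    by (intro that [of "distr (measure_pmf (embed_pmf wP)) borel y" "distr (measure_pmf (embed_pmf wQ)) borel y"])
      (simp_all add: D_def)
qed

lemma rescaled_node_mem:
  assumes "a \<le> b"
  shows "(a + b) / 2 + (b - a) / 2 * node N j \<in> {a..b}"
proof -
  have "\<bar>(b - a) / 2 * node N j\<bar> \<le> (b - a) / 2"
    using assms abs_sin_le_one [of "2 * pi * real j / real N"] by (simp add: node_def abs_mult mult_left_le)
  moreover have "(a + b) / 2 + d \<in> {a..b}" if "\<bar>d\<bar> \<le> (b - a) / 2" for d :: real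
    using that by (auto simp: abs_le_iff field_simps)
  ultimately show ?thesis
    by blast
qed

definition fejer_signed_sum :: "nat \<Rightarrow> real \<Rightarrow> real \<Rightarrow> (real \<Rightarrow> real) \<Rightarrow> real" where
  "fejer_signed_sum s a b f =
    (\<Sum>j<8 * s. (- 1) ^ j * fejer_kernel (8 * s) (2 * s) j * f ((a + b) / 2 + (b - a) / 2 * node (8 * s) j))"

lemma fejer_signed_sum_power:
  assumes "l \<le> s"
  shows "fejer_signed_sum s a b (\<lambda>x. x ^ l) = 0"
  using sum_alternating_fejer_poly_moment [of "2 * s" l "4 * s" "(a + b) / 2" "(b - a) / 2"] assms
  by (simp add: fejer_signed_sum_def)

lemma fejer_signed_sum_abs_deviation_le:
  assumes "0 < s" and "a < b"
  shows "fejer_signed_sum s a b (\<lambda>x. indicator {a..b} x *\<^sub>R \<bar>x - (a + b) / 2\<bar>)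
    \<le> (b - a) / 2 * (- real s / (2 * pi))"
proof -
  have "indicator {a..b} x *\<^sub>R \<bar>x - (a + b) / 2\<bar> = (b - a) / 2 * \<bar>node (8 * s) j\<bar>"
    if "x = (a + b) / 2 + (b - a) / 2 * node (8 * s) j" for x j
    using that rescaled_node_mem [of a b "8 * s" j] assms by (simp add: abs_mult)
  then have "fejer_signed_sum s a b (\<lambda>x. indicator {a..b} x *\<^sub>R \<bar>x - (a + b) / 2\<bar>)
      = (b - a) / 2 * (\<Sum>j<8 * s. abs_moment_term s j)"
    by (simp add: fejer_signed_sum_def abs_moment_term_def sum_distrib_left mult_ac)
  also have "\<dots> \<le> (b - a) / 2 * (- real s / (2 * pi))"
    using sum_abs_moment_term_le [OF assms(1)] assms(2) by (intro mult_left_mono) auto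
  finally show ?thesis .
qed

lemma fejer_probability_pair:
  assumes "0 < s" and "a < b"
  obtains P Q :: "real measure"
  where "prob_space P" "prob_space Q" "sets P = sets borel" "sets Q = sets borel"
    "measure P {a..b} = 1" "measure Q {a..b} = 1"
    "\<And>f. f \<in> borel_measurable borel \<Longrightarrow>
      (\<integral>x. f x \<partial>P) - (\<integral>x. f x \<partial>Q) = 2 / (16 * (real s)\<^sup>2) * fejer_signed_sum s a b f"
proof -
  define K where "K = fejer_kernel (8 * s) (2 * s)"
  define y where "y j = (a + b) / 2 + (b - a) / 2 * node (8 * s) j" for j
  have dominated: "\<bar>(- 1) ^ j * K j\<bar> \<le> K j" for j
    by (simp add: K_def fejer_kernel_nonneg abs_mult)
  have balanced: "(\<Sum>j<8 * s. (- 1) ^ j * K j) = 0"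
    using sum_alternating_fejer_moment [of "2 * s" 0 "4 * s"] by (simp add: K_def)
  have mass: "(\<Sum>j<8 * s. K j) = 16 * (real s)\<^sup>2"
    using sum_fejer_kernel [of "2 * s" "8 * s"] by (simp add: K_def power2_eq_square)
  then have mass_pos: "0 < (\<Sum>j<8 * s. K j)"
    using assms by simp
  have range: "y j \<in> {a..b}" for j
    unfolding y_def using assms by (intro rescaled_node_mem) simp
  obtain P Q :: "real measure"
    where "prob_space P" "prob_space Q" "sets P = sets borel" "sets Q = sets borel"
      "measure P {a..b} = 1" "measure Q {a..b} = 1"
    and "\<And>f. f \<in> borel_measurable borel \<Longrightarrow>
      (\<integral>x. f x \<partial>P) - (\<integral>x. f x \<partial>Q) = 2 / (\<Sum>j<8 * s. K j) * (\<Sum>j<8 * s. (- 1) ^ j * K j * f (y j))"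
    using probability_pair_from_signed_weights [where y = y, OF dominated balanced mass_pos range] by blast
  then show ?thesis
    unfolding mass unfolding K_def y_def fejer_signed_sum_def [symmetric] by (rule that)
qed

lemma moment_matching_pair:
  assumes "0 < s" and "a < b"
  obtains P Q :: "real measure"
  where "prob_space P" "prob_space Q" "sets P = sets borel" "sets Q = sets borel"
    "measure P {a..b} = 1" "measure Q {a..b} = 1"
    "\<And>l. l \<le> s \<Longrightarrow> (\<integral>x. x ^ l \<partial>P) = (\<integral>x. x ^ l \<partial>Q)"
    "(b - a) / (32 * pi * real s) \<le>
      \<bar>(\<integral>x\<in>{a..b}. \<bar>x - (a + b) / 2\<bar> \<partial>P) - (\<integral>x\<in>{a..b}. \<bar>x - (a + b) / 2\<bar> \<partial>Q)\<bar>"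
proof -
  obtain P Q :: "real measure"
    where PQ: "prob_space P" "prob_space Q" "sets P = sets borel" "sets Q = sets borel"
      "measure P {a..b} = 1" "measure Q {a..b} = 1"
    and difference: "\<And>f. f \<in> borel_measurable borel \<Longrightarrow>
      (\<integral>x. f x \<partial>P) - (\<integral>x. f x \<partial>Q) = 2 / (16 * (real s)\<^sup>2) * fejer_signed_sum s a b f"
    using fejer_probability_pair [OF assms] by blast
  have "(\<integral>x. x ^ l \<partial>P) = (\<integral>x. x ^ l \<partial>Q)" if "l \<le> s" for l
  proof -
    have "(\<lambda>x::real. x ^ l) \<in> borel_measurable borel"
      by measurable
    then show ?thesis
      using difference fejer_signed_sum_power [OF that] by fastforce
  qed
  moreover have "(b - a) / (32 * pi * real s) \<le>
      \<bar>(\<integral>x\<in>{a..b}. \<bar>x - (a + b) / 2\<bar> \<partial>P) - (\<integral>x\<in>{a..b}. \<bar>x - (a + b) / 2\<bar> \<partial>Q)\<bar>"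
  proof -
    define f where "f = (\<lambda>x::real. indicator {a..b} x *\<^sub>R \<bar>x - (a + b) / 2\<bar>)"
    have "f \<in> borel_measurable borel"
      unfolding f_def by measurable
    then have "(\<integral>x. f x \<partial>P) - (\<integral>x. f x \<partial>Q) = 2 / (16 * (real s)\<^sup>2) * fejer_signed_sum s a b f"
      by (rule difference)
    also have "\<dots> \<le> 2 / (16 * (real s)\<^sup>2) * ((b - a) / 2 * (- real s / (2 * pi)))"
      using fejer_signed_sum_abs_deviation_le [OF assms] by (intro mult_left_mono) (simp_all add: f_def)
    also have "\<dots> = - ((b - a) / (32 * pi * real s))"
      using assms by (simp add: power2_eq_square field_simps)
    finally have bound: "(\<integral>x. f x \<partial>P) - (\<integral>x. f x \<partial>Q) \<le> - ((b - a) / (32 * pi * real s))" .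
    have "(\<integral>x\<in>{a..b}. \<bar>x - (a + b) / 2\<bar> \<partial>M) = (\<integral>x. f x \<partial>M)" for M
      by (simp add: set_lebesgue_integral_def f_def)
    then show ?thesis
      using bound by simp
  qed
  ultimately show ?thesis
    using PQ that by blast
qed

theorem proposition2:
  shows "\<exists>c::real. c > 0 \<and>
    (\<forall>(s::nat) (a::real) (b::real). 0 < s \<and> 0 < a \<and> a < b \<longrightarrow>
      (\<exists>P Q :: real measure.
         prob_space P \<and> prob_space Q \<and>
         sets P = sets borel \<and> sets Q = sets borel \<and>
         measure P {a..b} = 1 \<and> measure Q {a..b} = 1 \<and>
         (\<forall>l\<le>s. (\<integral>x. x ^ l \<partial>P) = (\<integral>x. x ^ l \<partial>Q)) \<and>
         \<bar>(\<integral>x\<in>{a..b}. \<bar>x - (a + b) / 2\<bar> \<partial>P) - (\<integral>x\<in>{a..b}. \<bar>x - (a + b) / 2\<bar> \<partial>Q)\<bar>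
           \<ge> c * (b - a) / real s))"
proof (intro exI [of _ "1 / 128"] conjI allI impI)
  fix s :: nat and a b :: real
  assume "0 < s \<and> 0 < a \<and> a < b"
  then have "0 < s" and "a < b"
    by simp_all
  obtain P Q :: "real measure"
    where "prob_space P" "prob_space Q" "sets P = sets borel" "sets Q = sets borel"
      "measure P {a..b} = 1" "measure Q {a..b} = 1"
      "\<And>l. l \<le> s \<Longrightarrow> (\<integral>x. x ^ l \<partial>P) = (\<integral>x. x ^ l \<partial>Q)"
      "(b - a) / (32 * pi * real s) \<le>
        \<bar>(\<integral>x\<in>{a..b}. \<bar>x - (a + b) / 2\<bar> \<partial>P) - (\<integral>x\<in>{a..b}. \<bar>x - (a + b) / 2\<bar> \<partial>Q)\<bar>"
    using moment_matching_pair [OF \<open>0 < s\<close> \<open>a < b\<close>] by blast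
  moreover have "1 / 128 * (b - a) / real s \<le> (b - a) / (32 * pi * real s)"
    using \<open>0 < s\<close> \<open>a < b\<close> pi_less_4 by (simp add: frac_le)
  ultimately show "\<exists>P Q :: real measure.
      prob_space P \<and> prob_space Q \<and> sets P = sets borel \<and> sets Q = sets borel \<and>
      measure P {a..b} = 1 \<and> measure Q {a..b} = 1 \<and>
      (\<forall>l\<le>s. (\<integral>x. x ^ l \<partial>P) = (\<integral>x. x ^ l \<partial>Q)) \<and>
      \<bar>(\<integral>x\<in>{a..b}. \<bar>x - (a + b) / 2\<bar> \<partial>P) - (\<integral>x\<in>{a..b}. \<bar>x - (a + b) / 2\<bar> \<partial>Q)\<bar>
        \<ge> 1 / 128 * (b - a) / real s"
    by (meson order_trans)
qed simp

end
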